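(* If $\mathrm{char}(\Bbbk)=2$, then $P$ is minimally generated by $g_1=z^2+x^2y+y^5z^3$ and $g_2=y^3+x^4+y^3z^5+x^2y^4z^3$; in particular $\mu(P)=2$.
   Context: $\Bbbk$ is a field. $\rho:\Bbbk[[x,y,z]]\to\Bbbk[[t]]$ is the $\Bbbk$-algebra morphism with $\rho(x)=t^6+t^{31}$, $\rho(y)=t^8$, $\rho(z)=t^{10}$, and $P=\ker\rho$. $\mu(P)$ is the minimal number of generators of $P$. *)

theory Defs
  imports "HOL-Computational_Algebra.Formal_Power_Series"
begin

text \<open>The power series ring k[[x,y,z]] is realised as the iterated power series
ring ((k[[x]])[[y]])[[z]]: the outermost variable is z, then y, innermost x.\<close>

type_synonym 'a fps3 = "'a fps fps fps"

definition X3 :: "'a::comm_ring_1 fps3" where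
  "X3 = fps_const (fps_const fps_X)"

definition Y3 :: "'a::comm_ring_1 fps3" where
  "Y3 = fps_const fps_X"

definition Z3 :: "'a::comm_ring_1 fps3" where
  "Z3 = fps_X"

definition coeff3 :: "'a fps3 \<Rightarrow> nat \<Rightarrow> nat \<Rightarrow> nat \<Rightarrow> 'a" where
  "coeff3 f i j k = fps_nth (fps_nth (fps_nth f k) j) i"

text \<open>The substitution morphism rho: x |-> t^6 + t^31, y |-> t^8, z |-> t^10.
Coefficient of t^n of rho f is a finite sum, since the monomial x^i y^j z^k
maps to a series of order 6i+8j+10k; summing over i,j,k <= n captures all
contributing terms.\<close>
definition rho :: "'a::comm_ring_1 fps3 \<Rightarrow> 'a fps" where
  "rho f = Abs_fps (\<lambda>n. \<Sum>(i,j,k) \<in> {..n} \<times> {..n} \<times> {..n}.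
      coeff3 f i j k * (fps_nth ((fps_X ^ 6 + fps_X ^ 31) ^ i * fps_X ^ (8*j + 10*k)) n))"

definition P_ideal :: "'a::comm_ring_1 fps3 set" where
  "P_ideal = {f. rho f = 0}"

definition ideal_of_list :: "'b::comm_ring_1 list \<Rightarrow> 'b set" where
  "ideal_of_list gs = {\<Sum>i<length gs. c i * gs ! i | c. True}"

definition mu :: "'b::comm_ring_1 set \<Rightarrow> nat" where
  "mu I = (LEAST n. \<exists>gs. length gs = n \<and> I = ideal_of_list gs)"

end

(*
  Division by g1 = z^2 + ... and g2 = y^3 + ..., whose initial monomials z^2 and y^3 dominate
  their tails of higher order, writes every f as c1 g1 + c2 g2 + N with N supported on the
  monomials x^i y^j z^k, j < 3, k < 2.  Now rho (x^i y^j z^k) = t^w (1 + t^25)^i with weight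
  w = 6i + 8j + 10k, and on these monomials w together with the parity of i determines (i, j, k).
  In characteristic 2 this makes rho injective on remainders: if a term with odd i occurs, the
  one of least weight w is the only contribution to the coefficient of t^(w + 25), because
  for even i only even powers of t^25 survive in (1 + t^25)^i mod 2; otherwise the term of least weight is the
  only contribution to t^w.  The ideal is not principal: from
  (g1, g2) = (f), g1 = a f and g2 = b f, the coefficient of y^3 in a g2 = b g1 forces a(0) = 0,
  while the coefficient of z^2 in g1 = a (c1 g1 + c2 g2) gives a(0) c1(0) = 1.
*)

theory Submission
  imports Defs "HOL-Library.Product_Plus"
begin

unbundle fps_syntax

definition fps3_of :: "(nat \<Rightarrow> nat \<Rightarrow> nat \<Rightarrow> 'a) \<Rightarrow> 'a fps3" where
  "fps3_of c = Abs_fps (\<lambda>k. Abs_fps (\<lambda>j. Abs_fps (\<lambda>i. c i j k)))"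

lemma coeff3_fps3_of [simp]: "coeff3 (fps3_of c) i j k = c i j k"
  by (simp add: fps3_of_def coeff3_def)

lemma fps3_eqI: "(\<And>i j k. coeff3 f i j k = coeff3 g i j k) \<Longrightarrow> f = g"
  unfolding coeff3_def by (intro fps_ext) simp

lemma coeff3_add [simp]: "coeff3 (f + g) i j k = coeff3 f i j k + coeff3 g i j k"
  by (simp add: coeff3_def)

lemma coeff3_diff [simp]: "coeff3 (f - g) i j k = coeff3 f i j k - coeff3 (g :: 'a::ring fps3) i j k"
  by (simp add: coeff3_def)

lemma coeff3_uminus [simp]: "coeff3 (- f) i j k = - coeff3 (f :: 'a::ring fps3) i j k"
  by (simp add: coeff3_def)

lemma coeff3_zero [simp]: "coeff3 0 i j k = 0"
  by (simp add: coeff3_def)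

lemma coeff3_sum [simp]: "coeff3 (sum h S) i j k = (\<Sum>m\<in>S. coeff3 (h m) i j k)"
  by (simp add: coeff3_def fps_sum_nth)

lemma coeff3_one: "coeff3 (1 :: 'a::comm_ring_1 fps3) i j k = (if i = 0 \<and> j = 0 \<and> k = 0 then 1 else 0)"
  by (simp add: coeff3_def)

lemma coeff3_mult:
  "coeff3 (f * g) i j k = (\<Sum>(i', j', k') \<in> {..i} \<times> {..j} \<times> {..k}.
      coeff3 f i' j' k' * coeff3 (g :: 'a::comm_ring_1 fps3) (i - i') (j - j') (k - k'))"
proof -
  have "coeff3 (f * g) i j k = (\<Sum>k'\<le>k. \<Sum>j'\<le>j. \<Sum>i'\<le>i.
      coeff3 f i' j' k' * coeff3 g (i - i') (j - j') (k - k'))"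
    by (simp add: coeff3_def fps_mult_nth fps_sum_nth atLeast0AtMost)
  also have "\<dots> = (\<Sum>(k', j', i') \<in> {..k} \<times> {..j} \<times> {..i}.
      coeff3 f i' j' k' * coeff3 g (i - i') (j - j') (k - k'))"
    by (simp add: sum.cartesian_product)
  also have "\<dots> = (\<Sum>(i', j', k') \<in> {..i} \<times> {..j} \<times> {..k}.
      coeff3 f i' j' k' * coeff3 g (i - i') (j - j') (k - k'))"
    by (rule sum.reindex_bij_witness[of _ "\<lambda>(i', j', k'). (k', j', i')" "\<lambda>(k', j', i'). (i', j', k')"])
      auto
  finally show ?thesis .
qed

definition mon3 :: "nat \<Rightarrow> nat \<Rightarrow> nat \<Rightarrow> 'a::comm_ring_1 fps3" where
  "mon3 a b c = X3 ^ a * Y3 ^ b * Z3 ^ c"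

lemma coeff3_mon3_mult:
  "coeff3 (mon3 a b c * h) i j k =
     (if a \<le> i \<and> b \<le> j \<and> c \<le> k then coeff3 h (i - a) (j - b) (k - c) else 0)"
proof -
  have "mon3 a b c * h = fps_const (fps_const (fps_X ^ a) * fps_X ^ b) * (fps_X ^ c * h)"
    by (simp add: mon3_def X3_def Y3_def Z3_def fps_const_power mult.assoc)
  then show ?thesis
    by (auto simp: coeff3_def fps_X_power_mult_nth mult.assoc)
qed

lemma coeff3_mon3:
  "coeff3 (mon3 a b c :: 'a::comm_ring_1 fps3) i j k = (if i = a \<and> j = b \<and> k = c then 1 else 0)"
  using coeff3_mon3_mult[of a b c 1 i j k] by (auto simp: coeff3_one)

type_synonym exponent = "nat \<times> nat \<times> nat"

fun coeff_at :: "'a fps3 \<Rightarrow> exponent \<Rightarrow> 'a" where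
  "coeff_at f (i, j, k) = coeff3 f i j k"

lemma coeff_at_add [simp]: "coeff_at (f + g) a = coeff_at f a + coeff_at g a"
  by (cases a) simp

lemma coeff_at_diff [simp]: "coeff_at (f - g) a = coeff_at f a - coeff_at (g :: 'a::ring fps3) a"
  by (cases a) simp

lemma coeff_at_mon3: "coeff_at (mon3 a b c :: 'a::comm_ring_1 fps3) e = (if e = (a, b, c) then 1 else 0)"
  by (cases e) (simp add: coeff3_mon3)

lemma fps3_eq_0_iff: "f = 0 \<longleftrightarrow> (\<forall>a. coeff_at f a = 0)"
  by (auto intro: fps3_eqI)

definition splittings :: "exponent \<Rightarrow> (exponent \<times> exponent) set" where
  "splittings a = {(b, d). b + d = a}"

lemma finite_splittings [simp]: "finite (splittings a)"
proof -
  obtain i j k where "a = (i, j, k)" by (cases a)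
  then have "splittings a \<subseteq> ({..i} \<times> {..j} \<times> {..k}) \<times> ({..i} \<times> {..j} \<times> {..k})"
    by (auto simp: splittings_def)
  then show ?thesis by (rule finite_subset) simp
qed

lemma coeff_at_mult:
  "coeff_at (f * g) a = (\<Sum>(b, d) \<in> splittings a. coeff_at f b * coeff_at (g :: 'a::comm_ring_1 fps3) d)"
proof -
  obtain i j k where a: "a = (i, j, k)" by (cases a)
  have "coeff_at (f * g) a = (\<Sum>(i', j', k') \<in> {..i} \<times> {..j} \<times> {..k}.
      coeff3 f i' j' k' * coeff3 g (i - i') (j - j') (k - k'))"
    by (simp add: a coeff3_mult)
  also have "\<dots> = (\<Sum>(b, d) \<in> splittings a. coeff_at f b * coeff_at g d)"
    by (rule sum.reindex_bij_witness[of _ fst "\<lambda>(i', j', k'). ((i', j', k'), (i - i', j - j', k - k'))"])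
      (auto simp: splittings_def a)
  finally show ?thesis .
qed

fun weight :: "exponent \<Rightarrow> nat" where
  "weight (i, j, k) = 6 * i + 8 * j + 10 * k"

lemma even_weight [simp]: "even (weight a)"
  by (cases a) simp

fun rho_mon :: "exponent \<Rightarrow> 'a::comm_ring_1 fps" where
  "rho_mon (i, j, k) = (fps_X ^ 6 + fps_X ^ 31) ^ i * fps_X ^ (8 * j + 10 * k)"

declare rho_mon.simps [simp del]

lemma rho_mon_add: "rho_mon (a + b) = rho_mon a * rho_mon b"
  by (cases a, cases b) (simp add: rho_mon.simps power_add algebra_simps)

lemma rho_mon_nth:
  "(rho_mon a :: 'a::comm_ring_1 fps) $ n =
     (\<Sum>l\<le>fst a. of_nat (fst a choose l) * (if n = weight a + 25 * l then 1 else 0))"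
proof -
  obtain i j k where a: "a = (i, j, k)" by (cases a)
  have "(rho_mon a :: 'a fps) = (fps_X ^ 31 + fps_X ^ 6) ^ i * fps_X ^ (8 * j + 10 * k)"
    by (simp add: a rho_mon.simps add.commute)
  also have "\<dots> = (\<Sum>l\<le>i. of_nat (i choose l) * (fps_X ^ 31) ^ l * (fps_X ^ 6) ^ (i - l))
      * fps_X ^ (8 * j + 10 * k)"
    by (simp only: binomial_ring)
  also have "\<dots> = (\<Sum>l\<le>i. fps_const (of_nat (i choose l))
      * fps_X ^ (6 * i + 8 * j + 10 * k + 25 * l))"
  proof -
    have summand: "of_nat (i choose l) * (fps_X ^ 31) ^ l * (fps_X ^ 6) ^ (i - l)
        * fps_X ^ (8 * j + 10 * k) = fps_const (of_nat (i choose l)) * (fps_X ^ (6 * i + 8 * j + 10 * k + 25 * l) :: 'a fps)"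
      if "l \<le> i" for l
    proof -
      have "6 * i + 8 * j + 10 * k + 25 * l = 31 * l + 6 * (i - l) + (8 * j + 10 * k)"
        using that by simp
      then show ?thesis
        by (simp only: power_add power_mult fps_of_nat mult.assoc)
    qed
    show ?thesis
      unfolding sum_distrib_right by (rule sum.cong[OF refl], rule summand) simp
  qed
  finally show ?thesis
    by (simp add: a fps_sum_nth)
qed

lemma rho_mon_nth_below_weight: "n < weight a \<Longrightarrow> rho_mon a $ n = 0"
  by (simp add: rho_mon_nth)

definition cube :: "nat \<Rightarrow> exponent set" where
  "cube n = {..n} \<times> {..n} \<times> {..n}"

lemma finite_cube [simp]: "finite (cube n)"
  by (simp add: cube_def)

lemma weight_le_in_cube: "weight a \<le> n \<Longrightarrow> a \<in> cube n"
  by (cases a) (auto simp: cube_def)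

lemma add_in_cube: "b + d \<in> cube n \<Longrightarrow> b \<in> cube n \<and> d \<in> cube n"
  by (cases b, cases d) (auto simp: cube_def)

lemma rho_mon_nth_outside_cube: "a \<notin> cube n \<Longrightarrow> rho_mon a $ n = 0"
  by (cases a) (auto simp: cube_def rho_mon_nth_below_weight)

lemma rho_nth: "rho f $ n = (\<Sum>a\<in>cube n. coeff_at f a * rho_mon a $ n)"
  unfolding rho_def cube_def by (simp, intro sum.cong refl) (clarsimp simp: rho_mon.simps)

lemma rho_nth_superset:
  assumes "finite S" "{a. weight a \<le> n} \<subseteq> S"
  shows "rho f $ n = (\<Sum>a\<in>S. coeff_at f a * rho_mon a $ n)"
proof -
  have "rho f $ n = (\<Sum>a\<in>{a. weight a \<le> n}. coeff_at f a * rho_mon a $ n)"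
    unfolding rho_nth
    by (rule sum.mono_neutral_right) (auto simp: rho_mon_nth_below_weight intro: weight_le_in_cube)
  also have "\<dots> = (\<Sum>a\<in>S. coeff_at f a * rho_mon a $ n)"
    by (rule sum.mono_neutral_left) (use assms in \<open>auto simp: rho_mon_nth_below_weight\<close>)
  finally show ?thesis .
qed

lemma rho_add: "rho (f + g) = rho f + rho g"
  by (rule fps_ext) (simp add: rho_nth sum.distrib distrib_right)

lemma rho_diff: "rho (f - g) = rho f - rho (g :: 'a::comm_ring_1 fps3)"
  by (rule fps_ext) (simp add: rho_nth sum_subtractf left_diff_distrib)

lemma rho_mult: "rho (f * g) = rho f * rho (g :: 'a::comm_ring_1 fps3)"
proof (rule fps_ext)
  fix n
  let ?B = "cube n"
  let ?F = "\<lambda>b d. coeff_at f b * coeff_at g d * rho_mon (b + d) $ n"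
  have "rho (f * g) $ n = (\<Sum>a\<in>?B. \<Sum>(b, d)\<in>splittings a. coeff_at f b * coeff_at g d * rho_mon a $ n)"
    by (simp add: rho_nth coeff_at_mult sum_distrib_right case_prod_unfold)
  also have "\<dots> = (\<Sum>(b, d)\<in>{(b, d). b + d \<in> ?B}. ?F b d)"
    unfolding sum.Sigma[OF finite_cube ballI[OF finite_splittings]]
    by (rule sum.reindex_bij_witness[of _ "\<lambda>(b, d). (b + d, (b, d))" snd])
      (auto simp: splittings_def)
  also have "\<dots> = (\<Sum>(b, d)\<in>?B \<times> ?B. ?F b d)"
  proof (rule sum.mono_neutral_left)
    show "\<forall>x\<in>?B \<times> ?B - {(b, d). b + d \<in> ?B}. (case x of (b, d) \<Rightarrow> ?F b d) = 0"
    proof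
      fix x assume "x \<in> ?B \<times> ?B - {(b, d). b + d \<in> ?B}"
      then obtain b d where "x = (b, d)" "b + d \<notin> ?B" by auto
      then show "(case x of (b, d) \<Rightarrow> ?F b d) = 0" by (simp add: rho_mon_nth_outside_cube)
    qed
  qed (auto dest: add_in_cube)
  also have "\<dots> = (\<Sum>b\<in>?B. \<Sum>d\<in>?B. \<Sum>p\<le>n.
      (coeff_at f b * rho_mon b $ p) * (coeff_at g d * rho_mon d $ (n - p)))"
    by (simp add: sum.cartesian_product[symmetric] rho_mon_add fps_mult_nth atLeast0AtMost
        sum_distrib_left mult_ac)
  also have "\<dots> = (\<Sum>p\<le>n. (\<Sum>b\<in>?B. coeff_at f b * rho_mon b $ p)
      * (\<Sum>d\<in>?B. coeff_at g d * rho_mon d $ (n - p)))"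
    by (simp add: sum_product sum.swap[of _ "{..n}"])
  also have "\<dots> = (\<Sum>p\<le>n. rho f $ p * rho g $ (n - p))"
    by (intro sum.cong refl arg_cong2[where f = "(*)"] rho_nth_superset[symmetric])
      (auto intro: weight_le_in_cube)
  also have "\<dots> = (rho f * rho g) $ n"
    by (simp add: fps_mult_nth atLeast0AtMost)
  finally show "rho (f * g) $ n = (rho f * rho g) $ n" .
qed

lemma rho_mon3: "rho (mon3 a b c :: 'a::comm_ring_1 fps3) = rho_mon (a, b, c)"
proof (rule fps_ext)
  fix n
  have "rho (mon3 a b c :: 'a fps3) $ n
      = (\<Sum>e\<in>insert (a, b, c) (cube n). coeff_at (mon3 a b c :: 'a fps3) e * rho_mon e $ n)"
    by (rule rho_nth_superset) (auto intro: weight_le_in_cube)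
  also have "\<dots> = (\<Sum>e\<in>insert (a, b, c) (cube n). if e = (a, b, c) then rho_mon e $ n else 0)"
    by (intro sum.cong) (auto simp: coeff_at_mon3)
  also have "\<dots> = rho_mon (a, b, c) $ n"
    by (simp add: sum.delta')
  finally show "rho (mon3 a b c :: 'a fps3) $ n = rho_mon (a, b, c) $ n" .
qed

lemma ideal_of_list_Nil: "ideal_of_list [] = {0}"
  by (simp add: ideal_of_list_def)

lemma ideal_of_list_single: "ideal_of_list [g] = {c * g | c. True}"
  by (auto simp: ideal_of_list_def)

lemma ideal_of_list_pair: "ideal_of_list [g, h] = {c * g + d * h | c d. True}"
  unfolding ideal_of_list_def
proof (intro set_eqI iffI)
  fix x assume "x \<in> {\<Sum>i<length [g, h]. c i * [g, h] ! i | c. True}"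
  then show "x \<in> {c * g + d * h | c d. True}"
    by (auto simp: lessThan_Suc add.commute)
next
  fix x assume "x \<in> {c * g + d * h | c d. True}"
  then obtain c d where "x = c * g + d * h" by blast
  then show "x \<in> {\<Sum>i<length [g, h]. c i * [g, h] ! i | c. True}"
    by (intro CollectI exI[of _ "\<lambda>i. if i = 0 then c else d"]) (simp add: lessThan_Suc)
qed

lemma mem_ideal_of_list_single: "g \<in> ideal_of_list [g]"
proof -
  have "g = 1 * g" by simp
  then show ?thesis unfolding ideal_of_list_single by blast
qed

lemma mem_ideal_of_list_pair: "g \<in> ideal_of_list [g, h]" "h \<in> ideal_of_list [g, h]"
proof -
  have "g = 1 * g + 0 * h" "h = 0 * g + 1 * h" by simp_all
  then show "g \<in> ideal_of_list [g, h]" "h \<in> ideal_of_list [g, h]"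
    unfolding ideal_of_list_pair by blast+
qed

definition gen1 :: "'a::comm_ring_1 fps3" where
  "gen1 = mon3 0 0 2 + mon3 2 1 0 + mon3 0 5 3"

definition gen2 :: "'a::comm_ring_1 fps3" where
  "gen2 = mon3 0 3 0 + mon3 4 0 0 + mon3 0 3 5 + mon3 2 4 3"

lemma two_eq_0_fps:
  assumes "(2 :: 'a::comm_ring_1) = 0"
  shows "(2 :: 'a fps) = 0"
  by (rule fps_ext) (simp add: fps_numeral_nth assms)

lemma rho_gen1:
  assumes "(2 :: 'a::comm_ring_1) = 0"
  shows "rho (gen1 :: 'a fps3) = 0"
proof -
  let ?t = "fps_X :: 'a fps"
  have "rho (gen1 :: 'a fps3) = (?t ^ 6 + ?t ^ 31) ^ 2 * ?t ^ 8 + ?t ^ 20 + ?t ^ 40 * ?t ^ 30"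
    by (simp add: gen1_def rho_add rho_mon3 rho_mon.simps)
  also have "\<dots> = 2 * (?t ^ 20 + ?t ^ 45 + ?t ^ 70)"
    by (simp add: power2_eq_square algebra_simps flip: power_add)
  finally show ?thesis
    using two_eq_0_fps[OF assms] by simp
qed

lemma rho_gen2:
  assumes "(2 :: 'a::comm_ring_1) = 0"
  shows "rho (gen2 :: 'a fps3) = 0"
proof -
  let ?t = "fps_X :: 'a fps"
  have "rho (gen2 :: 'a fps3)
      = ?t ^ 24 + ((?t ^ 6 + ?t ^ 31) ^ 2) ^ 2 + ?t ^ 24 * ?t ^ 50 + (?t ^ 6 + ?t ^ 31) ^ 2 * ?t ^ 62"
    by (simp add: gen2_def rho_add rho_mon3 rho_mon.simps flip: power_mult)
  also have "\<dots> = 2 * (?t ^ 24 + 2 * ?t ^ 49 + 4 * ?t ^ 74 + 3 * ?t ^ 99 + ?t ^ 124)"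
    by (simp add: power2_eq_square algebra_simps flip: power_add)
  finally show ?thesis
    using two_eq_0_fps[OF assms] by simp
qed

lemma ideal_gens_subset_P_ideal:
  assumes "(2 :: 'a::comm_ring_1) = 0"
  shows "ideal_of_list [gen1, gen2] \<subseteq> (P_ideal :: 'a fps3 set)"
  by (auto simp: ideal_of_list_pair P_ideal_def rho_add rho_mult rho_gen1[OF assms] rho_gen2[OF assms])

definition order_at_least :: "'a::zero fps3 \<Rightarrow> nat \<Rightarrow> bool" where
  "order_at_least f d \<longleftrightarrow> (\<forall>i j k. i + j + k < d \<longrightarrow> coeff3 f i j k = 0)"

lemma order_at_least_0 [simp]: "order_at_least f 0"
  by (simp add: order_at_least_def)

lemma order_at_least_add:
  "order_at_least f d \<Longrightarrow> order_at_least g d \<Longrightarrow> order_at_least (f + g :: 'a::comm_ring_1 fps3) d"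
  by (simp add: order_at_least_def)

lemma order_at_least_diff:
  "order_at_least f d \<Longrightarrow> order_at_least g d \<Longrightarrow> order_at_least (f - g :: 'a::ring fps3) d"
  by (simp add: order_at_least_def)

lemma order_at_least_uminus: "order_at_least f d \<Longrightarrow> order_at_least (- f :: 'a::ring fps3) d"
  by (simp add: order_at_least_def)

lemma order_at_least_mono: "order_at_least f d \<Longrightarrow> d' \<le> d \<Longrightarrow> order_at_least f d'"
  by (simp add: order_at_least_def)

lemma order_at_least_mult:
  assumes "order_at_least f d" "order_at_least g e"
  shows "order_at_least (f * g :: 'a::comm_ring_1 fps3) (d + e)"
  unfolding order_at_least_def
proof (intro allI impI)
  fix i j k assume "i + j + k < d + e"
  then have "coeff3 f i' j' k' * coeff3 g (i - i') (j - j') (k - k') = 0"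
    if "i' \<le> i" "j' \<le> j" "k' \<le> k" for i' j' k'
  proof (cases "i' + j' + k' < d")
    case True
    then show ?thesis using assms(1) by (simp add: order_at_least_def)
  next
    case False
    then have "(i - i') + (j - j') + (k - k') < e" using \<open>i + j + k < d + e\<close> that by linarith
    then show ?thesis using assms(2) by (simp add: order_at_least_def)
  qed
  then show "coeff3 (f * g) i j k = 0"
    by (auto simp: coeff3_mult intro!: sum.neutral)
qed

lemma order_at_least_mon3: "order_at_least (mon3 a b c :: 'a::comm_ring_1 fps3) (a + b + c)"
  by (simp add: order_at_least_def coeff3_mon3)

lemma order_at_least_eq_0: "(\<And>d. order_at_least f d) \<Longrightarrow> f = 0"
  by (rule fps3_eqI) (auto simp: order_at_least_def)

definition reduced :: "'a::zero fps3 \<Rightarrow> bool" where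
  "reduced f \<longleftrightarrow> (\<forall>i j k. coeff3 f i j k \<noteq> 0 \<longrightarrow> j < 3 \<and> k < 2)"

text \<open>Under the hypothesis of \<open>order_series3_tail\<close> the coefficient \<open>(i, j, k)\<close> of \<open>h m\<close>
  vanishes for \<open>m > i + j + k + c\<close>, so truncating there gives the limit of the partial sums.\<close>

definition series3 :: "nat \<Rightarrow> (nat \<Rightarrow> 'a::comm_ring_1 fps3) \<Rightarrow> 'a fps3" where
  "series3 c h = fps3_of (\<lambda>i j k. \<Sum>m < i + j + k + c + 1. coeff3 (h m) i j k)"

lemma order_series3_tail:
  assumes "\<And>m. order_at_least (h m) (m - c)"
  shows "order_at_least (series3 c h - (\<Sum>m<n. h m)) (n - c)"
  unfolding order_at_least_def
proof (intro allI impI)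
  fix i j k assume ijk: "i + j + k < n - c"
  have "(\<Sum>m<n. coeff3 (h m) i j k) = (\<Sum>m < i + j + k + c + 1. coeff3 (h m) i j k)"
    by (rule sum.mono_neutral_right) (use assms ijk in \<open>auto simp: order_at_least_def\<close>)
  then show "coeff3 (series3 c h - (\<Sum>m<n. h m)) i j k = 0"
    by (simp add: series3_def)
qed

lemma reduced_series3:
  assumes "\<And>m. reduced (h m)"
  shows "reduced (series3 c h)"
  unfolding reduced_def
proof (intro allI impI)
  fix i j k assume "coeff3 (series3 c h) i j k \<noteq> 0"
  then obtain m where "coeff3 (h m) i j k \<noteq> 0"
    by (auto simp: series3_def simp del: sum.lessThan_Suc elim: sum.not_neutral_contains_not_neutral)
  then show "j < 3 \<and> k < 2"
    using assms by (simp add: reduced_def)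
qed

definition z2_quot :: "'a::comm_ring_1 fps3 \<Rightarrow> 'a fps3" where
  "z2_quot f = fps3_of (\<lambda>i j k. coeff3 f i j (k + 2))"

definition y3_quot :: "'a::comm_ring_1 fps3 \<Rightarrow> 'a fps3" where
  "y3_quot f = fps3_of (\<lambda>i j k. if k < 2 then coeff3 f i (j + 3) k else 0)"

definition remainder3 :: "'a::comm_ring_1 fps3 \<Rightarrow> 'a fps3" where
  "remainder3 f = fps3_of (\<lambda>i j k. if j < 3 \<and> k < 2 then coeff3 f i j k else 0)"

lemma monomial_division: "f = mon3 0 0 2 * z2_quot f + mon3 0 3 0 * y3_quot f + remainder3 f"
proof (rule fps3_eqI)
  fix i j k :: nat
  consider k' where "k = k' + 2" | j' where "k < 2" "j = j' + 3" | "k < 2" "j < 3"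
    by (metis add.commute less_imp_add_positive not_less le_Suc_ex)
  then show "coeff3 f i j k = coeff3 (mon3 0 0 2 * z2_quot f + mon3 0 3 0 * y3_quot f + remainder3 f) i j k"
    by cases (simp_all add: coeff3_mon3_mult z2_quot_def y3_quot_def remainder3_def)
qed

lemma reduced_remainder3: "reduced (remainder3 f)"
  by (simp add: reduced_def remainder3_def)

lemma order_at_least_remainder3: "order_at_least f d \<Longrightarrow> order_at_least (remainder3 f) d"
  by (simp add: order_at_least_def remainder3_def)

lemma order_at_least_z2_quot: "order_at_least f d \<Longrightarrow> order_at_least (z2_quot f) (d - 2)"
  by (simp add: order_at_least_def z2_quot_def)

lemma order_at_least_y3_quot: "order_at_least f d \<Longrightarrow> order_at_least (y3_quot f) (d - 3)"
  by (simp add: order_at_least_def y3_quot_def)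

definition division_step :: "'a::comm_ring_1 fps3 \<Rightarrow> 'a fps3 \<Rightarrow> 'a fps3 \<Rightarrow> 'a fps3" where
  "division_step r1 r2 f = - (z2_quot f * r1 + y3_quot f * r2)"

lemma division_step_eq:
  "f = z2_quot f * (mon3 0 0 2 + r1) + y3_quot f * (mon3 0 3 0 + r2) + remainder3 f
     + division_step r1 r2 f"
  by (subst (1) monomial_division[of f]) (simp add: division_step_def algebra_simps)

lemma order_at_least_division_step:
  assumes "order_at_least r1 3" "order_at_least r2 4" "order_at_least f d"
  shows "order_at_least (division_step r1 r2 f) (Suc d)"
proof -
  have "order_at_least (z2_quot f * r1) (d - 2 + 3)"
    by (rule order_at_least_mult[OF order_at_least_z2_quot[OF assms(3)] assms(1)])
  moreover have "order_at_least (y3_quot f * r2) (d - 3 + 4)"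
    by (rule order_at_least_mult[OF order_at_least_y3_quot[OF assms(3)] assms(2)])
  ultimately show ?thesis
    unfolding division_step_def
    by (intro order_at_least_uminus order_at_least_add) (erule order_at_least_mono, linarith)+
qed

lemma order_at_least_division_step_iter:
  assumes "order_at_least r1 3" "order_at_least r2 4"
  shows "order_at_least ((division_step r1 r2 ^^ n) f) n"
proof (induction n)
  case (Suc n)
  then show ?case
    using order_at_least_division_step[OF assms] by simp
qed simp

lemma division_step_iter_eq:
  fixes f r1 r2 :: "'a::comm_ring_1 fps3"
  defines "F m \<equiv> (division_step r1 r2 ^^ m) f"
  shows "f = (\<Sum>m<n. z2_quot (F m) * (mon3 0 0 2 + r1) + y3_quot (F m) * (mon3 0 3 0 + r2)
      + remainder3 (F m)) + F n"
proof (induction n)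
  case (Suc n)
  have "F (Suc n) = division_step r1 r2 (F n)"
    by (simp add: F_def)
  with Suc division_step_eq[of "F n" r1 r2] show ?case
    by (simp add: algebra_simps)
qed (simp add: F_def)

lemma division_by_initial_forms:
  fixes f r1 r2 :: "'a::comm_ring_1 fps3"
  assumes r1: "order_at_least r1 3" and r2: "order_at_least r2 4"
  obtains c1 c2 N where "f = c1 * (mon3 0 0 2 + r1) + c2 * (mon3 0 3 0 + r2) + N" "reduced N"
proof -
  let ?g1 = "mon3 0 0 2 + r1" and ?g2 = "mon3 0 3 0 + r2"
  define F where "F n = (division_step r1 r2 ^^ n) f" for n
  have order_F: "order_at_least (F n) n" for n
    unfolding F_def by (rule order_at_least_division_step_iter[OF r1 r2])
  have partial: "f = (\<Sum>m<n. z2_quot (F m) * ?g1 + y3_quot (F m) * ?g2 + remainder3 (F m)) + F n" for n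
    unfolding F_def by (rule division_step_iter_eq)
  define c1 where "c1 = series3 3 (\<lambda>m. z2_quot (F m))"
  define c2 where "c2 = series3 3 (\<lambda>m. y3_quot (F m))"
  define N where "N = series3 3 (\<lambda>m. remainder3 (F m))"
  have order_terms: "order_at_least (z2_quot (F m)) (m - 3)" "order_at_least (y3_quot (F m)) (m - 3)"
    "order_at_least (remainder3 (F m)) (m - 3)" for m
    by (rule order_at_least_mono[OF order_at_least_z2_quot[OF order_F]], simp,
        rule order_at_least_y3_quot[OF order_F],
        rule order_at_least_mono[OF order_at_least_remainder3[OF order_F]], simp)
  have tail: "order_at_least (c1 - (\<Sum>m<n. z2_quot (F m))) (n - 3)"
    "order_at_least (c2 - (\<Sum>m<n. y3_quot (F m))) (n - 3)"
    "order_at_least (N - (\<Sum>m<n. remainder3 (F m))) (n - 3)" for n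
    unfolding c1_def c2_def N_def by (rule order_series3_tail, rule order_terms)+
  have "order_at_least (f - (c1 * ?g1 + c2 * ?g2 + N)) n" for n
  proof -
    have "f - (c1 * ?g1 + c2 * ?g2 + N) = F (n + 3)
       - (c1 - (\<Sum>m<n + 3. z2_quot (F m))) * ?g1 - (c2 - (\<Sum>m<n + 3. y3_quot (F m))) * ?g2
       - (N - (\<Sum>m<n + 3. remainder3 (F m)))"
      by (subst (1) partial[of "n + 3"])
        (simp add: sum.distrib sum_distrib_left sum_distrib_right algebra_simps)
    also have "order_at_least \<dots> n"
      using order_at_least_mult[OF tail(1)[of "n + 3"] order_at_least_0, of ?g1]
        order_at_least_mult[OF tail(2)[of "n + 3"] order_at_least_0, of ?g2] tail(3)[of "n + 3"]
      by (intro order_at_least_diff[OF order_at_least_diff[OF order_at_least_diff]]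
          order_at_least_mono[OF order_F[of "n + 3"]]) simp_all
    finally show ?thesis .
  qed
  then have "f = c1 * ?g1 + c2 * ?g2 + N"
    using order_at_least_eq_0 by fastforce
  moreover have "reduced N"
    unfolding N_def by (intro reduced_series3 reduced_remainder3)
  ultimately show thesis by (rule that)
qed

lemma even_choose_odd:
  assumes "even (i :: nat)" "odd l"
  shows "even (i choose l)"
proof -
  have "l * (i choose l) = i * ((i - 1) choose (l - 1))"
    using assms(2) by (intro times_binomial_minus1_eq) (cases l, auto)
  then have "even (l * (i choose l))"
    using assms(1) by simp
  then show ?thesis
    using assms(2) by simp
qed

lemma two_eq_0_if_char2: "CHAR('a::comm_ring_1) = 2 \<Longrightarrow> (2 :: 'a) = 0"
  using of_nat_CHAR[where 'a = 'a] by simp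

lemma of_nat_odd_char2:
  assumes "CHAR('a::comm_ring_1) = 2" "odd n"
  shows "of_nat n = (1 :: 'a)"
proof -
  obtain q where q: "n = 2 * q + 1"
    using assms(2) oddE by blast
  then show ?thesis
    using two_eq_0_if_char2[OF assms(1)] by simp
qed

lemma reduced_coeff_at:
  "reduced N \<Longrightarrow> coeff_at N (i, j, k) \<noteq> 0 \<Longrightarrow> j < 3 \<and> k < 2"
  by (simp add: reduced_def)

lemma weight_parity_inj:
  assumes "weight (i, j, k) = weight (i', j', k')" "even i \<longleftrightarrow> even i'"
    and "j < 3" "k < 2" "j' < 3" "k' < 2"
  shows "(i, j, k) = (i', j', k')"
proof -
  obtain p p' r where i: "i = 2 * p + r" and i': "i' = 2 * p' + r"
    using assms(2) by (metis div_mult_mod_eq mult.commute parity_cases)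
  have eq: "12 * p + (8 * j + 10 * k) = 12 * p' + (8 * j' + 10 * k')"
    using assms(1) i i' by simp
  \<comment> \<open>for \<open>j < 3\<close>, \<open>k < 2\<close> the six values of \<open>8 j + 10 k\<close> are distinct modulo 12\<close>
  have "(12 * p + (8 * j + 10 * k)) mod 12 = (12 * p' + (8 * j' + 10 * k')) mod 12"
    by (simp only: eq)
  then have "(8 * j + 10 * k) mod 12 = (8 * j' + 10 * k') mod 12"
    by (simp only: mod_mult_self4)
  moreover have "j \<in> {0, 1, 2}" "k \<in> {0, 1}" "j' \<in> {0, 1, 2}" "k' \<in> {0, 1}"
    using assms(3-6) by auto
  ultimately have "j = j' \<and> k = k'"
    by auto
  with eq i i' show ?thesis
    by simp
qed

lemma rho_nth_single_contribution:
  fixes N :: "'a::comm_ring_1 fps3"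
  assumes unique: "\<And>a l. l \<le> fst a \<Longrightarrow> coeff_at N a \<noteq> 0
      \<Longrightarrow> of_nat (fst a choose l) \<noteq> (0 :: 'a) \<Longrightarrow> weight a + 25 * l = weight a0 + 25 * l0 \<Longrightarrow> a = a0 \<and> l = l0"
    and one: "of_nat (fst a0 choose l0) = (1 :: 'a)" and "l0 \<le> fst a0"
  shows "rho N $ (weight a0 + 25 * l0) = coeff_at N a0"
proof -
  let ?T = "weight a0 + 25 * l0"
  have summand: "coeff_at N a * rho_mon a $ ?T = (if a = a0 then coeff_at N a0 else 0)" for a
  proof -
    have "coeff_at N a * rho_mon a $ ?T = (\<Sum>l\<le>fst a. if a = a0 \<and> l = l0 then coeff_at N a0 else 0)"
      unfolding rho_mon_nth sum_distrib_left
    proof (rule sum.cong[OF refl])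
      fix l assume "l \<in> {..fst a}"
      then show "coeff_at N a * (of_nat (fst a choose l) * (if ?T = weight a + 25 * l then 1 else 0))
          = (if a = a0 \<and> l = l0 then coeff_at N a0 else 0)"
        using unique[of l a] one
        by (cases "coeff_at N a = 0"; cases "of_nat (fst a choose l) = (0 :: 'a)") auto
    qed
    also have "\<dots> = (if a = a0 then coeff_at N a0 else 0)"
      using \<open>l0 \<le> fst a0\<close> by (auto simp: sum.delta)
    finally show ?thesis .
  qed
  have "rho N $ ?T = (\<Sum>a\<in>cube ?T. if a = a0 then coeff_at N a0 else 0)"
    unfolding rho_nth summand ..
  also have "\<dots> = coeff_at N a0"
    using weight_le_in_cube[of a0 ?T] by simp
  finally show ?thesis .
qed

lemma rho_nth_least_odd_weight:
  fixes N :: "'a::comm_ring_1 fps3"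
  assumes char: "CHAR('a) = 2" and N: "reduced N"
    and a0: "coeff_at N a0 \<noteq> 0" "odd (fst a0)"
    and least: "\<And>a. coeff_at N a \<noteq> 0 \<Longrightarrow> odd (fst a) \<Longrightarrow> weight a0 \<le> weight a"
  shows "rho N $ (weight a0 + 25) = coeff_at N a0"
proof -
  obtain i0 j0 k0 where a0_eq: "a0 = (i0, j0, k0)" by (cases a0)
  have "rho N $ (weight a0 + 25 * 1) = coeff_at N a0"
  proof (rule rho_nth_single_contribution)
    fix a l assume "l \<le> fst a" and nz: "coeff_at N a \<noteq> 0"
      and choose: "of_nat (fst a choose l) \<noteq> (0 :: 'a)" and T: "weight a + 25 * l = weight a0 + 25 * 1"
    obtain i j k where a_eq: "a = (i, j, k)" by (cases a)
    have "odd l"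
      using arg_cong[OF T, of even] by simp
    have "odd i"
    proof (rule ccontr)
      assume "\<not> odd i"
      then have "even (i choose l)" using even_choose_odd \<open>odd l\<close> by blast
      with choose char show False by (simp add: a_eq of_nat_eq_0_iff_char_dvd)
    qed
    have "weight a0 \<le> weight a"
      by (rule least[OF nz]) (simp add: a_eq \<open>odd i\<close>)
    with T have "l \<le> 1"
      by linarith
    with T \<open>odd l\<close> have "l = 1" "weight a = weight a0"
      by (auto simp: le_Suc_eq)
    moreover have "a = a0"
      using weight_parity_inj[of i j k i0 j0 k0] \<open>weight a = weight a0\<close> \<open>odd i\<close> a0
        reduced_coeff_at[OF N] nz by (simp add: a_eq a0_eq)
    ultimately show "a = a0 \<and> l = 1" by simp
  qed (use a0 of_nat_odd_char2[OF char] in \<open>auto simp: odd_pos Suc_le_eq\<close>)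
  then show ?thesis by simp
qed

lemma rho_nth_least_weight_even:
  fixes N :: "'a::comm_ring_1 fps3"
  assumes N: "reduced N" and a0: "coeff_at N a0 \<noteq> 0"
    and least_even: "\<And>a. coeff_at N a \<noteq> 0 \<Longrightarrow> even (fst a) \<and> weight a0 \<le> weight a"
  shows "rho N $ weight a0 = coeff_at N a0"
proof -
  obtain i0 j0 k0 where a0_eq: "a0 = (i0, j0, k0)" by (cases a0)
  have "rho N $ (weight a0 + 25 * 0) = coeff_at N a0"
  proof (rule rho_nth_single_contribution)
    fix a l assume nz: "coeff_at N a \<noteq> 0" and T: "weight a + 25 * l = weight a0 + 25 * 0"
    obtain i j k where a_eq: "a = (i, j, k)" by (cases a)
    have "l = 0" "weight a = weight a0"
      using T least_even[OF nz] by auto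
    moreover have "a = a0"
      using weight_parity_inj[of i j k i0 j0 k0] \<open>weight a = weight a0\<close> least_even[OF nz]
        least_even[OF a0] reduced_coeff_at[OF N] nz a0 by (simp add: a_eq a0_eq)
    ultimately show "a = a0 \<and> l = 0" by simp
  qed simp_all
  then show ?thesis by simp
qed

lemma reduced_eq_0_if_rho_eq_0:
  fixes N :: "'a::comm_ring_1 fps3"
  assumes char: "CHAR('a) = 2" and N: "reduced N" and rho: "rho N = 0"
  shows "N = 0"
proof (rule ccontr)
  assume "N \<noteq> 0"
  then obtain a where a: "coeff_at N a \<noteq> 0"
    by (auto simp: fps3_eq_0_iff)
  show False
  proof (cases "\<exists>a. coeff_at N a \<noteq> 0 \<and> odd (fst a)")
    case True
    then obtain a0 where a0: "coeff_at N a0 \<noteq> 0" "odd (fst a0)"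
      and least: "\<And>a. coeff_at N a \<noteq> 0 \<Longrightarrow> odd (fst a) \<Longrightarrow> weight a0 \<le> weight a"
      using ex_has_least_nat[of "\<lambda>a. coeff_at N a \<noteq> 0 \<and> odd (fst a)" _ weight] by blast
    have "rho N $ (weight a0 + 25) = coeff_at N a0"
      by (rule rho_nth_least_odd_weight[OF char N a0 least])
    with rho a0 show False by simp
  next
    case False
    obtain a0 where a0: "coeff_at N a0 \<noteq> 0"
      and least: "\<And>a. coeff_at N a \<noteq> 0 \<Longrightarrow> weight a0 \<le> weight a"
      using ex_has_least_nat[of "\<lambda>a. coeff_at N a \<noteq> 0" a weight] a by blast
    have "rho N $ weight a0 = coeff_at N a0"
      using False least by (intro rho_nth_least_weight_even[OF N a0]) blast
    with rho a0 show False by simp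
  qed
qed

lemma P_ideal_char2:
  assumes char: "CHAR('a::comm_ring_1) = 2"
  shows "(P_ideal :: 'a fps3 set) = ideal_of_list [gen1, gen2]"
proof
  note two = two_eq_0_if_char2[OF char]
  show "ideal_of_list [gen1, gen2] \<subseteq> (P_ideal :: 'a fps3 set)"
    by (rule ideal_gens_subset_P_ideal[OF two])
  show "(P_ideal :: 'a fps3 set) \<subseteq> ideal_of_list [gen1, gen2]"
  proof
    fix f :: "'a fps3" assume "f \<in> P_ideal"
    then have rho_f: "rho f = 0" by (simp add: P_ideal_def)
    have "order_at_least (mon3 2 1 0 + mon3 0 5 3 :: 'a fps3) 3"
      "order_at_least (mon3 4 0 0 + mon3 0 3 5 + mon3 2 4 3 :: 'a fps3) 4"
      by (intro order_at_least_add order_at_least_mono[OF order_at_least_mon3]; simp)+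
    then obtain c1 c2 N where f: "f = c1 * gen1 + c2 * gen2 + N" and N: "reduced N"
      by (rule division_by_initial_forms) (simp add: gen1_def gen2_def add.assoc)
    have "N = f - c1 * gen1 - c2 * gen2"
      using f by simp
    then have "rho N = 0"
      by (simp add: rho_diff rho_mult rho_f rho_gen1[OF two] rho_gen2[OF two])
    with char N have "N = 0"
      by (rule reduced_eq_0_if_rho_eq_0)
    with f show "f \<in> ideal_of_list [gen1, gen2]"
      by (auto simp: ideal_of_list_pair)
  qed
qed

lemma coeff3_mult_gen1:
  "coeff3 (h * gen1) 0 0 2 = coeff3 h 0 0 0" "coeff3 (h * gen1) 0 3 0 = 0"
  by (simp_all add: gen1_def distrib_left mult.commute[of h] coeff3_mon3_mult)

lemma coeff3_mult_gen2:
  "coeff3 (h * gen2) 0 0 2 = 0" "coeff3 (h * gen2) 0 3 0 = coeff3 h 0 0 0"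
  by (simp_all add: gen2_def distrib_left mult.commute[of h] coeff3_mon3_mult)

lemma coeff3_0_0_0_mult:
  "coeff3 (f * g) 0 0 0 = coeff3 f 0 0 0 * coeff3 (g :: 'a::comm_ring_1 fps3) 0 0 0"
  by (simp add: coeff3_mult)

lemma gen_ideal_not_principal:
  "ideal_of_list [gen1, gen2] \<noteq> ideal_of_list [f :: 'a::comm_ring_1 fps3]"
proof
  assume eq: "ideal_of_list [gen1, gen2] = ideal_of_list [f]"
  have "gen1 \<in> ideal_of_list [f]" "gen2 \<in> ideal_of_list [f]" "f \<in> ideal_of_list [gen1, gen2]"
    by (metis eq mem_ideal_of_list_pair mem_ideal_of_list_single)+
  then obtain a b c1 c2 where a: "gen1 = a * f" and b: "gen2 = b * f"
    and c: "f = c1 * gen1 + c2 * gen2"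
    by (auto simp: ideal_of_list_single ideal_of_list_pair)
  have "a * gen2 = b * gen1"
    by (simp add: a b mult_ac)
  then have "coeff3 (a * gen2) 0 3 0 = coeff3 (b * gen1) 0 3 0"
    by simp
  then have "coeff3 a 0 0 0 = 0"
    by (simp add: coeff3_mult_gen1 coeff3_mult_gen2)
  have "gen1 = (a * c1) * gen1 + (a * c2) * gen2"
    using a c by (simp add: algebra_simps)
  then have "coeff3 gen1 0 0 2 = coeff3 ((a * c1) * gen1 + (a * c2) * gen2) 0 0 2"
    by simp
  then have "(1 :: 'a) = coeff3 a 0 0 0 * coeff3 c1 0 0 0"
    by (simp add: coeff3_mult_gen1 coeff3_mult_gen2 coeff3_0_0_0_mult)
      (simp add: gen1_def coeff3_mon3)
  with \<open>coeff3 a 0 0 0 = 0\<close> show False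
    by simp
qed

lemma mu_eq_2:
  fixes g h :: "'a::comm_ring_1"
  assumes "ideal_of_list [g, h] \<noteq> {0}" "\<And>f. ideal_of_list [g, h] \<noteq> ideal_of_list [f]"
  shows "mu (ideal_of_list [g, h]) = 2"
  unfolding mu_def
proof (rule Least_equality)
  show "\<exists>gs. length gs = 2 \<and> ideal_of_list [g, h] = ideal_of_list gs"
    by (intro exI[of _ "[g, h]"]) simp
next
  fix n assume "\<exists>gs. length gs = n \<and> ideal_of_list [g, h] = ideal_of_list gs"
  then obtain gs where "length gs = n" "ideal_of_list [g, h] = ideal_of_list gs"
    by blast
  with assms show "2 \<le> n"
    by (cases gs rule: remdups_adj.cases) (auto simp: ideal_of_list_Nil)
qed

lemma gen_ideal_neq_0: "ideal_of_list [gen1, gen2] \<noteq> {0 :: 'a::comm_ring_1 fps3}"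
proof -
  have "coeff3 (gen1 :: 'a fps3) 0 0 2 = 1"
    by (simp add: gen1_def coeff3_mon3)
  then have "gen1 \<noteq> (0 :: 'a fps3)"
    by auto
  then show ?thesis
    using mem_ideal_of_list_pair(1)[of gen1 gen2] by auto
qed

theorem mainTheorem6:
  fixes g1 g2 :: "'a::field fps3"
  assumes "CHAR('a) = 2"
    and "g1 = Z3^2 + X3^2 * Y3 + Y3^5 * Z3^3"
    and "g2 = Y3^3 + X3^4 + Y3^3 * Z3^5 + X3^2 * Y3^4 * Z3^3"
  shows "P_ideal = ideal_of_list [g1, g2] \<and> mu (P_ideal :: 'a fps3 set) = 2"
proof -
  have gens: "g1 = gen1" "g2 = gen2"
    using assms(2,3) by (simp_all add: gen1_def gen2_def mon3_def)
  have P: "(P_ideal :: 'a fps3 set) = ideal_of_list [gen1, gen2]"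
    by (rule P_ideal_char2[OF assms(1)])
  have "mu (ideal_of_list [gen1, gen2 :: 'a fps3]) = 2"
    by (rule mu_eq_2[OF gen_ideal_neq_0 gen_ideal_not_principal])
  with P gens show ?thesis
    by simp
qed

end
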